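(* Fix $a,c\in\mathbb{C}$ with $\operatorname{Re} c>\operatorname{Re} a>0$ and $\tau,\beta>0$ with $\tau-\beta<1$. Let $\alpha\in\mathbb{C}$ with $\sigma=\operatorname{Re}\alpha>1$ and $r\in\mathbb{C}$ with $\operatorname{Re} r>0$ or $r=0$, and assume $\int_0^\infty \frac{t^{\sigma-1}e^{-t}}{1-e^{-t}}\,|\Phi^{\tau,\beta}(a;c;-r/t)|\,dt<\infty$. Then $\zeta^{2r}(\alpha)$ is defined (its integral converges absolutely) and $$\zeta^{r}(\alpha)-2^{1-\alpha}\zeta^{2r}(\alpha)=\frac{1}{\Gamma(\alpha)}\int_0^\infty\frac{t^{\alpha-1}e^{-t}}{1+e^{-t}}\,\Phi^{\tau,\beta}\Big(a;c;-\frac{r}{t}\Big)\,dt .$$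
   Context: For $\tau,\beta>0$ with $\tau-\beta<1$ and $a,c\in\mathbb{C}$, the $(\tau,\beta)$-confluent hypergeometric function is the entire function $\Phi^{\tau,\beta}(a;c;z)=\frac{\Gamma(c)}{\Gamma(a)}\sum_{n=0}^{\infty}\frac{\Gamma(a+\tau n)}{\Gamma(c+\beta n)}\frac{z^n}{n!}$ (equal, for $\operatorname{Re}c>\operatorname{Re}a>0$, to $\frac{\Gamma(c)}{\Gamma(a)\Gamma(c-a)}\int_0^1 t^{a-1}(1-t)^{c-a-1}\sum_{k\ge0}\frac{\Gamma(c+\tau k)}{\Gamma(c+\beta k)}\frac{(zt^{\tau})^k}{k!}dt$). Generalized zeta function: $\zeta^{r}(\alpha)=\frac{1}{\Gamma(\alpha)}\int_0^\infty \frac{t^{\alpha-1}e^{-t}}{1-e^{-t}}\,\Phi^{\tau,\beta}(a;c;-r/t)\,dt$ for $\operatorname{Re}\alpha>1$, $\operatorname{Re}r>0$ or $r=0$, with $a,c,\tau,\beta$ fixed. *)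

theory Defs
  imports "HOL-Analysis.Analysis"
begin

definition Phi :: "real \<Rightarrow> real \<Rightarrow> complex \<Rightarrow> complex \<Rightarrow> complex \<Rightarrow> complex" where
  "Phi tau beta a c z = Gamma c / Gamma a *
     (\<Sum>n. Gamma (a + of_real (tau * real n)) / Gamma (c + of_real (beta * real n))
            * z ^ n / of_nat (fact n))"

definition zeta_integrand ::
  "real \<Rightarrow> real \<Rightarrow> complex \<Rightarrow> complex \<Rightarrow> complex \<Rightarrow> complex \<Rightarrow> real \<Rightarrow> complex" where
  "zeta_integrand tau beta a c r alpha t =
     (of_real t) powr (alpha - 1) * of_real (exp (-t) / (1 - exp (-t)))
       * Phi tau beta a c (- r / of_real t)"

definition gzeta :: "real \<Rightarrow> real \<Rightarrow> complex \<Rightarrow> complex \<Rightarrow> complex \<Rightarrow> complex \<Rightarrow> complex" where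
  "gzeta tau beta a c r alpha =
     1 / Gamma alpha * (LINT t:{0<..}|lborel. zeta_integrand tau beta a c r alpha t)"

end

theory Submission
  imports Defs
begin

text \<open>
  Put \<open>x = exp (-t)\<close>. The kernels of the three integrals are related by
  \<open>x/(1-x) - 2x^2/(1-x^2) = x/(1+x)\<close>. The substitution \<open>t \<mapsto> 2t\<close> turns
  \<open>2^(1-\<alpha>) \<zeta>^(2r)(\<alpha>)\<close> into the integral against the middle kernel, because \<open>\<Phi>\<close> only sees the
  ratio \<open>2r/2t = r/t\<close>. The other two kernels are dominated by \<open>x/(1-x)\<close>, the kernel of
  \<open>\<zeta>^r(\<alpha>)\<close>, so all integrals converge absolutely and the identity follows by linearity.
\<close>

lemma Phi_measurable [measurable]: "Phi tau beta a c \<in> borel_measurable borel"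
  unfolding Phi_def by measurable

lemma set_borel_measurable_powr_weight:
  fixes s :: complex and w :: "real \<Rightarrow> real" and g :: "real \<Rightarrow> complex"
  assumes [measurable]: "w \<in> borel_measurable borel" "g \<in> borel_measurable borel"
  shows "set_borel_measurable lborel {0<..} (\<lambda>t. of_real t powr s * of_real (w t) * g t)"
proof -
  have [measurable]:
    "(\<lambda>t. indicator {0<..} t *\<^sub>R (of_real t powr s :: complex)) \<in> borel_measurable borel"
    by (rule borel_measurable_continuous_on_indicator) (auto intro!: continuous_intros)
  have "(\<lambda>t. indicator {0<..} t *\<^sub>R (of_real t powr s * of_real (w t) * g t))
      = (\<lambda>t. (indicator {0<..} t *\<^sub>R (of_real t powr s :: complex)) * of_real (w t) * g t)"
    by (simp add: fun_eq_iff indicator_def)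
  then show ?thesis
    unfolding set_borel_measurable_def by (simp only:) measurable
qed

lemma norm_powr_weight:
  fixes s z :: complex and w t :: real
  assumes "t > 0"
  shows "norm (of_real t powr s * of_real w * z) = t powr Re s * \<bar>w\<bar> * norm z"
  using assms by (simp add: norm_mult norm_powr_real_powr)

lemma set_integrable_powr_weight_le:
  fixes s :: complex and v w :: "real \<Rightarrow> real" and g :: "real \<Rightarrow> complex"
  assumes "set_integrable lborel {0<..} (\<lambda>t. of_real t powr s * of_real (w t) * g t)"
    and "v \<in> borel_measurable borel" "g \<in> borel_measurable borel"
    and "\<And>t. t > 0 \<Longrightarrow> \<bar>v t\<bar> \<le> \<bar>w t\<bar>"
  shows "set_integrable lborel {0<..} (\<lambda>t. of_real t powr s * of_real (v t) * g t)"
proof (rule set_integrable_bound[OF assms(1)])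
  show "set_borel_measurable lborel {0<..} (\<lambda>t. of_real t powr s * of_real (v t) * g t)"
    using assms(2,3) by (rule set_borel_measurable_powr_weight)
  show "AE t in lborel. t \<in> {0<..} \<longrightarrow>
      norm (of_real t powr s * of_real (v t) * g t) \<le> norm (of_real t powr s * of_real (w t) * g t)"
    using assms(4) by (intro AE_I2) (auto simp: norm_powr_weight intro!: mult_left_mono mult_right_mono)
qed

lemma set_integrableI_nn_integral:
  fixes f :: "'a \<Rightarrow> 'b::{banach, second_countable_topology}"
  assumes "set_borel_measurable M A f" "(\<integral>\<^sup>+x\<in>A. ennreal (norm (f x)) \<partial>M) < \<infinity>"
  shows "set_integrable M A f"
  unfolding set_integrable_def
proof (rule integrableI_bounded)
  show "(\<lambda>x. indicator A x *\<^sub>R f x) \<in> borel_measurable M"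
    using assms(1) by (simp add: set_borel_measurable_def)
  have "(\<integral>\<^sup>+x. ennreal (norm (indicator A x *\<^sub>R f x)) \<partial>M) = (\<integral>\<^sup>+x\<in>A. ennreal (norm (f x)) \<partial>M)"
    by (rule nn_integral_cong) (simp add: indicator_def)
  then show "(\<integral>\<^sup>+x. ennreal (norm (indicator A x *\<^sub>R f x)) \<partial>M) < \<infinity>"
    using assms(2) by simp
qed

lemma
  fixes f :: "real \<Rightarrow> 'a::{banach, second_countable_topology}"
  assumes "c > 0"
  shows set_integrable_Ioi_stretch_iff:
      "set_integrable lborel {0<..} (\<lambda>t. f (c * t)) \<longleftrightarrow> set_integrable lborel {0<..} f"
    and set_integral_Ioi_stretch:
      "(LINT t:{0<..}|lborel. f t) = c *\<^sub>R (LINT t:{0<..}|lborel. f (c * t))"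
proof -
  have "indicator {0<..} (c * t) = (indicator {0<..} t :: real)" for t
    using assms by (simp add: indicator_def zero_less_mult_iff)
  then have stretch: "(\<lambda>t. indicator {0<..} (0 + c * t) *\<^sub>R f (0 + c * t))
      = (\<lambda>t. indicator {0<..} t *\<^sub>R f (c * t))"
    by simp
  show "set_integrable lborel {0<..} (\<lambda>t. f (c * t)) \<longleftrightarrow> set_integrable lborel {0<..} f"
    using lborel_integrable_real_affine_iff[of c "\<lambda>t. indicator {0<..} t *\<^sub>R f t" 0] assms
    unfolding set_integrable_def stretch by simp
  show "(LINT t:{0<..}|lborel. f t) = c *\<^sub>R (LINT t:{0<..}|lborel. f (c * t))"
    using lborel_integral_real_affine[of c "\<lambda>t. indicator {0<..} t *\<^sub>R f t" 0] assms
    unfolding set_lebesgue_integral_def stretch by simp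
qed

lemma frac_diff_double_frac:
  fixes x :: "'a::field"
  assumes "x \<noteq> 1" "x \<noteq> -1"
  shows "x / (1 - x) - 2 * x^2 / (1 - x^2) = x / (1 + x)"
proof -
  have "1 - x \<noteq> 0" "1 + x \<noteq> 0"
    using assms by (auto simp: add_eq_0_iff)
  moreover have "1 - x^2 = (1 - x) * (1 + x)"
    by (simp add: algebra_simps power2_eq_square)
  ultimately show ?thesis
    by (simp add: divide_simps) (simp add: algebra_simps power2_eq_square)
qed

lemma exp_frac_diff_double:
  fixes t :: real
  assumes "t \<noteq> 0"
  shows "exp (-t) / (1 - exp (-t)) - 2 * exp (-(2 * t)) / (1 - exp (-(2 * t)))
    = exp (-t) / (1 + exp (-t))"
proof -
  have "exp (-(2 * t)) = exp (-t)^2"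
    by (simp flip: exp_of_nat_mult)
  moreover have "exp (-t) \<noteq> 1" "exp (-t) \<noteq> -1"
    using assms by auto (smt (verit) exp_gt_zero)
  ultimately show ?thesis
    using frac_diff_double_frac by metis
qed

lemma zeta_integrand_set_integrable:
  assumes "(\<integral>\<^sup>+ t\<in>{0<..}. ennreal (t powr (Re alpha - 1) * exp (-t) / (1 - exp (-t))
              * norm (Phi tau beta a c (- r / of_real t))) \<partial>lborel) < \<infinity>"
  shows "set_integrable lborel {0<..} (zeta_integrand tau beta a c r alpha)"
proof (rule set_integrableI_nn_integral)
  show "set_borel_measurable lborel {0<..} (zeta_integrand tau beta a c r alpha)"
    unfolding zeta_integrand_def by (rule set_borel_measurable_powr_weight) measurable
  have "(\<integral>\<^sup>+t\<in>{0<..}. ennreal (norm (zeta_integrand tau beta a c r alpha t)) \<partial>lborel)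
      = (\<integral>\<^sup>+ t\<in>{0<..}. ennreal (t powr (Re alpha - 1) * exp (-t) / (1 - exp (-t))
              * norm (Phi tau beta a c (- r / of_real t))) \<partial>lborel)"
  proof (intro nn_integral_cong)
    have "norm (zeta_integrand tau beta a c r alpha t) = t powr (Re alpha - 1)
        * exp (-t) / (1 - exp (-t)) * norm (Phi tau beta a c (- r / of_real t))" if "t > 0" for t
      using that unfolding zeta_integrand_def norm_powr_weight[OF that] by simp
    then show "ennreal (norm (zeta_integrand tau beta a c r alpha t)) * indicator {0<..} t
        = ennreal (t powr (Re alpha - 1) * exp (-t) / (1 - exp (-t))
            * norm (Phi tau beta a c (- r / of_real t))) * indicator {0<..} t" for t
      by (simp add: indicator_def)
  qed
  then show "(\<integral>\<^sup>+t\<in>{0<..}. ennreal (norm (zeta_integrand tau beta a c r alpha t)) \<partial>lborel) < \<infinity>"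
    using assms by simp
qed

lemma zeta_integrand_double:
  assumes "t > 0"
  shows "zeta_integrand tau beta a c (2 * r) alpha (2 * t)
    = 2 powr (alpha - 1) * (of_real t powr (alpha - 1)
        * of_real (exp (-(2 * t)) / (1 - exp (-(2 * t)))) * Phi tau beta a c (- r / of_real t))"
proof -
  have "(of_real (2 * t) :: complex) powr (alpha - 1) = 2 powr (alpha - 1) * of_real t powr (alpha - 1)"
    using assms by (simp add: powr_times_real)
  moreover have "- (2 * r) / of_real (2 * t) = - r / of_real t"
    by simp
  ultimately show ?thesis
    by (simp add: zeta_integrand_def mult_ac)
qed

lemma
  fixes tau beta :: real and a c alpha r :: complex
  defines "f \<equiv> \<lambda>t. of_real t powr (alpha - 1)
      * of_real (exp (-(2 * t)) / (1 - exp (-(2 * t)))) * Phi tau beta a c (- r / of_real t)"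
  assumes "set_integrable lborel {0<..} f"
  shows set_integrable_zeta_integrand_double:
      "set_integrable lborel {0<..} (zeta_integrand tau beta a c (2 * r) alpha)"
    and set_integral_zeta_integrand_double:
      "2 powr (1 - alpha) * (LINT t:{0<..}|lborel. zeta_integrand tau beta a c (2 * r) alpha t)
        = 2 * (LINT t:{0<..}|lborel. f t)"
proof -
  have double: "zeta_integrand tau beta a c (2 * r) alpha (2 * t) = 2 powr (alpha - 1) * f t"
    if "t > 0" for t
    using zeta_integrand_double[OF that] by (simp add: f_def)
  have "set_integrable lborel {0<..} (\<lambda>t. zeta_integrand tau beta a c (2 * r) alpha (2 * t))"
    using assms(2) by (subst set_integrable_cong[OF refl refl double]) auto
  then show "set_integrable lborel {0<..} (zeta_integrand tau beta a c (2 * r) alpha)"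
    by (simp add: set_integrable_Ioi_stretch_iff[of 2 "zeta_integrand tau beta a c (2 * r) alpha"])
  have "(LINT t:{0<..}|lborel. zeta_integrand tau beta a c (2 * r) alpha (2 * t))
      = (LINT t:{0<..}|lborel. 2 powr (alpha - 1) * f t)"
    by (rule set_lebesgue_integral_cong) (auto simp: double)
  then have "2 powr (1 - alpha) * (LINT t:{0<..}|lborel. zeta_integrand tau beta a c (2 * r) alpha t)
      = 2 powr (1 - alpha) * 2 * (LINT t:{0<..}|lborel. 2 powr (alpha - 1) * f t)"
    by (simp add: set_integral_Ioi_stretch[of 2 "zeta_integrand tau beta a c (2 * r) alpha"]
        scaleR_conv_of_real)
  then show "2 powr (1 - alpha) * (LINT t:{0<..}|lborel. zeta_integrand tau beta a c (2 * r) alpha t)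
      = 2 * (LINT t:{0<..}|lborel. f t)"
    by (simp add: powr_add[symmetric])
qed

theorem theorem2:
  fixes tau beta :: real and a c alpha r :: complex
  assumes "Re c > Re a" and "Re a > 0"
    and "tau > 0" and "beta > 0" and "tau - beta < 1"
    and "Re alpha > 1"
    and "Re r > 0 \<or> r = 0"
    and "(\<integral>\<^sup>+ t\<in>{0<..}. ennreal (t powr (Re alpha - 1) * exp (-t) / (1 - exp (-t))
              * norm (Phi tau beta a c (- r / of_real t))) \<partial>lborel) < \<infinity>"
  shows "set_integrable lborel {0<..} (zeta_integrand tau beta a c (2 * r) alpha)
    \<and> gzeta tau beta a c r alpha - 2 powr (1 - alpha) * gzeta tau beta a c (2 * r) alpha
      = 1 / Gamma alpha * (LINT t:{0<..}|lborel.
          (of_real t) powr (alpha - 1) * of_real (exp (-t) / (1 + exp (-t)))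
            * Phi tau beta a c (- r / of_real t))"
proof -
  define g where "g t = Phi tau beta a c (- r / of_real t)" for t
  define h where "h w t = of_real t powr (alpha - 1) * of_real (w t) * g t" for w t
  define A B E where "A t = exp (-t) / (1 - exp (-t))" and "B t = exp (-t) / (1 + exp (-t))"
    and "E t = exp (-(2 * t)) / (1 - exp (-(2 * t)))" for t :: real
  have [measurable]: "g \<in> borel_measurable borel" "B \<in> borel_measurable borel"
    "E \<in> borel_measurable borel"
    unfolding g_def B_def E_def by measurable
  have weights: "A t = B t + 2 * E t" "0 \<le> B t" "0 \<le> E t" if "t > 0" for t
    using exp_frac_diff_double[of t] that by (auto simp: A_def B_def E_def)
  have zeta_eq: "zeta_integrand tau beta a c r alpha = h A"
    by (simp add: fun_eq_iff zeta_integrand_def h_def A_def g_def)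
  have intA: "set_integrable lborel {0<..} (h A)"
    using zeta_integrand_set_integrable[OF assms(8)] by (simp add: zeta_eq)
  have intB: "set_integrable lborel {0<..} (h B)"
    unfolding h_def using weights
    by (intro set_integrable_powr_weight_le[OF intA[unfolded h_def]]) auto
  have intE: "set_integrable lborel {0<..} (h E)"
    unfolding h_def using weights
    by (intro set_integrable_powr_weight_le[OF intA[unfolded h_def]]) auto
  have "h A t = h B t + 2 * h E t" if "t > 0" for t
    unfolding h_def weights(1)[OF that] by (simp add: algebra_simps)
  then have "(LINT t:{0<..}|lborel. h A t) = (LINT t:{0<..}|lborel. h B t + 2 * h E t)"
    by (intro set_lebesgue_integral_cong) auto
  also have "\<dots> = (LINT t:{0<..}|lborel. h B t) + 2 * (LINT t:{0<..}|lborel. h E t)"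
    using intB intE by simp
  also have "2 * (LINT t:{0<..}|lborel. h E t)
      = 2 powr (1 - alpha) * (LINT t:{0<..}|lborel. zeta_integrand tau beta a c (2 * r) alpha t)"
    using set_integral_zeta_integrand_double[OF intE[unfolded h_def E_def g_def]]
    unfolding h_def E_def g_def by (rule sym)
  finally have "gzeta tau beta a c r alpha - 2 powr (1 - alpha) * gzeta tau beta a c (2 * r) alpha
      = 1 / Gamma alpha * (LINT t:{0<..}|lborel. h B t)"
    unfolding gzeta_def zeta_eq by (simp add: algebra_simps)
  moreover have "set_integrable lborel {0<..} (zeta_integrand tau beta a c (2 * r) alpha)"
    using intE unfolding h_def E_def g_def by (rule set_integrable_zeta_integrand_double)
  ultimately show ?thesis
    unfolding h_def B_def g_def by blast
qed

end
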